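(* Let $(X,\|\cdot\|)$ be a Banach space and $(M,d)$ a metric space. Assume there exist increasing functions $\rho,\omega:[0,\infty)\to[0,\infty)$ tending to $\infty$ at $\infty$, a point $m_0\in M$, and for every $n\in\mathbb{N}$ a map $h_n:nB_X\to M$ with $h_n(0)=m_0$ and $\rho(\|x-y\|)\le d(h_n(x),h_n(y))\le\omega(\|x-y\|)$ for all $x,y\in nB_X$. Equip $M^4$ with the metric $d((a_i),(b_i))=\max_{1\le i\le4}d(a_i,b_i)$. Then there is a map $F:X\to M^4$ such that $\tilde\rho(\|x-y\|)\le d(F(x),F(y))\le\tilde\omega(\|x-y\|)$ for all $x,y\in X$, where $\tilde\rho(t)=\frac12\rho(t/2)$ and $\tilde\omega(t)=8\omega(3t)$.
   Context: $B_X$ denotes the closed unit ball of $X$, and $nB_X=\{x\in X:\|x\|\le n\}$. *)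

theory Defs
  imports "HOL-Analysis.Analysis"
begin

definition dist4 :: "('m::metric_space \<times> 'm \<times> 'm \<times> 'm) \<Rightarrow> ('m \<times> 'm \<times> 'm \<times> 'm) \<Rightarrow> real" where
  "dist4 p q = (case p of (a1, a2, a3, a4) \<Rightarrow> case q of (b1, b2, b3, b4) \<Rightarrow>
      max (max (dist a1 b1) (dist a2 b2)) (max (dist a3 b3) (dist a4 b4)))"

end

theory Submission
  imports Defs
begin

text \<open>Choose radii \<open>0 = a\<^sub>0 < a\<^sub>1 < \<dots>\<close> with \<open>8 a\<^sub>k \<le> a\<^sub>k\<^sub>+\<^sub>1\<close> and
  \<open>2 \<omega>(8 a\<^sub>k) \<le> \<rho>(3 a\<^sub>k\<^sub>+\<^sub>1)\<close>, and let \<open>T\<^sub>k\<close> be the radial map with norm profile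
  \<open>max 0 (min (r - a\<^sub>k) (8 a\<^sub>k\<^sub>+\<^sub>1 - r))\<close>. It is 3-Lipschitz, vanishes off the annulus
  \<open>a\<^sub>k < \<parallel>x\<parallel> < 8 a\<^sub>k\<^sub>+\<^sub>1\<close>, and \<open>\<parallel>T\<^sub>k x - T\<^sub>k y\<parallel> \<ge> \<parallel>x - y\<parallel> / 2\<close> whenever
  \<open>4 a\<^sub>k \<le> \<parallel>x\<parallel> < 4 a\<^sub>k\<^sub>+\<^sub>1\<close> and \<open>\<parallel>y\<parallel> \<le> \<parallel>x\<parallel>\<close>. Annuli of equal parity are disjoint, so
  for each parity the maps \<open>h\<^sub>n \<circ> T\<^sub>k\<close> glue to one map into M that equals \<open>m\<^sub>0\<close> off these
  annuli; two such maps suffice. Points in different annuli are compared through \<open>m\<^sub>0\<close> for the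
  upper bound. For the lower bound, a point y in a much smaller annulus than x contributes at most
  \<open>\<omega>(8 a\<^sub>k\<^sub>-\<^sub>1) \<le> \<rho>(3 a\<^sub>k) / 2\<close>, which is dominated by the contribution \<open>\<rho>(\<parallel>x\<parallel> - a\<^sub>k)\<close>
  of x.\<close>

definition tent :: "real \<Rightarrow> real \<Rightarrow> real \<Rightarrow> real" where
  "tent a c r = max 0 (min (r - a) (c - r))"

definition radial_tent :: "real \<Rightarrow> real \<Rightarrow> 'a::real_normed_vector \<Rightarrow> 'a" where
  "radial_tent a c x = tent a c (norm x) *\<^sub>R sgn x"

lemma tent_nonneg: "0 \<le> tent a c r"
  by (simp add: tent_def)

lemma tent_le_self: "0 \<le> a \<Longrightarrow> 0 \<le> r \<Longrightarrow> tent a c r \<le> r"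
  by (simp add: tent_def)

lemma tent_le_outer: "0 \<le> c \<Longrightarrow> 0 \<le> r \<Longrightarrow> tent a c r \<le> c"
  by (simp add: tent_def)

lemma tent_lipschitz: "\<bar>tent a c r - tent a c s\<bar> \<le> \<bar>r - s\<bar>"
  by (auto simp: tent_def max_def min_def)

lemma tent_nonzero_imp: "tent a c r \<noteq> 0 \<Longrightarrow> a < r \<and> r < c"
  by (auto simp: tent_def max_def min_def split: if_splits)

lemma norm_radial_tent: "0 \<le> a \<Longrightarrow> norm (radial_tent a c x) = tent a c (norm x)"
  by (auto simp: radial_tent_def norm_sgn tent_def)

lemma radial_tent_zero [simp]: "radial_tent a c 0 = 0"
  by (simp add: radial_tent_def)

lemma norm_sgn_diff_le:
  fixes x y :: "'a::real_normed_vector"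
  assumes "y \<noteq> 0" and "norm y \<le> norm x"
  shows "norm (sgn x - sgn y) \<le> 2 * norm (x - y) / norm x"
proof -
  have ny: "0 < norm y" using assms(1) by simp
  with assms(2) have nx: "0 < norm x" by linarith
  have "sgn x - sgn y = (1 / norm x) *\<^sub>R (x - y) + (1 / norm x - 1 / norm y) *\<^sub>R y"
    by (simp add: sgn_div_norm divide_inverse algebra_simps)
  then have "norm (sgn x - sgn y) \<le> norm (x - y) / norm x + (1 / norm y - 1 / norm x) * norm y"
    using norm_triangle_ineq[of "(1 / norm x) *\<^sub>R (x - y)" "(1 / norm x - 1 / norm y) *\<^sub>R y"]
      frac_le[of 1 1 "norm y" "norm x"] ny assms(2) by simp
  also have "(1 / norm y - 1 / norm x) * norm y = (norm x - norm y) / norm x"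
    using nx ny by (simp add: field_simps)
  also have "\<dots> \<le> norm (x - y) / norm x"
    using nx norm_triangle_ineq2[of x y] by (simp add: divide_right_mono)
  finally show ?thesis by simp
qed

lemma radial_tent_lipschitz_ordered:
  fixes x y :: "'a::real_normed_vector"
  assumes "0 \<le> a" and "norm y \<le> norm x"
  shows "norm (radial_tent a c x - radial_tent a c y) \<le> 3 * norm (x - y)"
proof (cases "y = 0")
  case True
  then have "norm (radial_tent a c x - radial_tent a c y) = tent a c (norm x)"
    using norm_radial_tent[OF assms(1)] by simp
  then show ?thesis
    using \<open>y = 0\<close> tent_le_self[OF assms(1) norm_ge_zero, of c x] norm_ge_zero[of x]
    by (simp del: norm_ge_zero)
next
  case False
  let ?f = "tent a c"
  have "radial_tent a c x - radial_tent a c y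
      = (?f (norm x) - ?f (norm y)) *\<^sub>R sgn x + ?f (norm y) *\<^sub>R (sgn x - sgn y)"
    by (simp add: radial_tent_def algebra_simps)
  then have "norm (radial_tent a c x - radial_tent a c y)
      \<le> \<bar>?f (norm x) - ?f (norm y)\<bar> * norm (sgn x) + ?f (norm y) * norm (sgn x - sgn y)"
    using norm_triangle_ineq tent_nonneg by (metis abs_of_nonneg norm_scaleR)
  also have "\<dots> \<le> norm (x - y) + norm y * (2 * norm (x - y) / norm x)"
    using tent_lipschitz[of a c "norm x" "norm y"] norm_triangle_ineq3[of x y]
      tent_le_self[OF assms(1) norm_ge_zero, of c y] norm_sgn_diff_le[OF False assms(2)]
    by (intro add_mono mult_mono) (auto simp: norm_sgn)
  also have "norm y * (2 * norm (x - y) / norm x) \<le> 2 * norm (x - y)"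
    using assms(2) False by (simp add: divide_le_eq mult.commute mult_right_mono)
  finally show ?thesis by simp
qed

lemma radial_tent_lipschitz:
  fixes x y :: "'a::real_normed_vector"
  assumes "0 \<le> a"
  shows "norm (radial_tent a c x - radial_tent a c y) \<le> 3 * norm (x - y)"
  using radial_tent_lipschitz_ordered[OF assms, of y x c] radial_tent_lipschitz_ordered[OF assms, of x y c]
  by (cases "norm y \<le> norm x") (auto simp: norm_minus_commute)

text \<open>On the inner half of its support the radial tent is \<open>x - a sgn x\<close>, and the perturbation
  \<open>a sgn x\<close> varies by at most half of \<open>\<parallel>x - y\<parallel>\<close> once \<open>4 a \<le> \<parallel>x\<parallel>\<close>.\<close>

lemma radial_tent_lower:
  fixes x y :: "'a::real_normed_vector"
  assumes "0 \<le> a" and "4 * a \<le> norm x" and "norm x \<le> (a + c) / 2" and "norm y \<le> norm x"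
  shows "norm (x - y) / 2 \<le> norm (radial_tent a c x - radial_tent a c y)"
proof (cases "norm y \<le> a")
  case True
  then have "radial_tent a c y = 0"
    by (simp add: radial_tent_def tent_def)
  moreover have "norm (radial_tent a c x) = norm x - a"
    using assms by (simp add: norm_radial_tent tent_def)
  ultimately show ?thesis
    using True assms(1,2) norm_triangle_ineq4[of x y] by simp
next
  case False
  then have "y \<noteq> 0" using assms(1) by auto
  have "norm z *\<^sub>R sgn z = z" for z :: 'a
    by (cases "z = 0") (simp_all add: sgn_div_norm)
  then have "radial_tent a c z = z - a *\<^sub>R sgn z" if "tent a c (norm z) = norm z - a" for z :: 'a
    using that by (simp add: radial_tent_def scaleR_diff_left)
  moreover have "tent a c (norm x) = norm x - a" and "tent a c (norm y) = norm y - a"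
    using assms False by (simp_all add: tent_def)
  ultimately have "radial_tent a c x - radial_tent a c y = (x - y) - a *\<^sub>R (sgn x - sgn y)"
    by (simp add: algebra_simps)
  then have "norm (x - y) - a * norm (sgn x - sgn y) \<le> norm (radial_tent a c x - radial_tent a c y)"
    using norm_triangle_ineq2[of "x - y" "a *\<^sub>R (sgn x - sgn y)"] assms(1) by simp
  moreover have "a * norm (sgn x - sgn y) \<le> a * (2 * norm (x - y) / norm x)"
    using norm_sgn_diff_le[OF \<open>y \<noteq> 0\<close> assms(4)] assms(1) by (rule mult_left_mono)
  moreover have "a * (2 * norm (x - y) / norm x) \<le> norm (x - y) / 2"
  proof -
    have "0 < norm x" using False assms(1,4) by linarith
    moreover have "4 * a * norm (x - y) \<le> norm x * norm (x - y)"
      using assms(2) by (simp add: mult_right_mono)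
    ultimately show ?thesis by (simp add: field_simps)
  qed
  ultimately show ?thesis by linarith
qed

lemma rapidly_growing_scales:
  fixes \<rho> g :: "real \<Rightarrow> real"
  assumes "filterlim \<rho> at_top at_top"
  obtains a :: "nat \<Rightarrow> real"
  where "a 0 = 0" and "\<And>k. 8 * a k \<le> a (Suc k)" and "\<And>k. 1 \<le> a (Suc k)"
    and "\<And>k. g (a k) \<le> \<rho> (3 * a (Suc k))"
proof -
  have "\<exists>r. max (8 * v) 1 \<le> r \<and> g v \<le> \<rho> (3 * r)" for v
  proof -
    obtain N where "\<And>u. N \<le> u \<Longrightarrow> g v \<le> \<rho> u"
      using assms by (auto simp: filterlim_at_top eventually_at_top_linorder)
    then show ?thesis
      by (intro exI[of _ "max (max (8 * v) 1) (N / 3)"]) auto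
  qed
  then obtain step where step: "\<And>v. max (8 * v) 1 \<le> step v \<and> g v \<le> \<rho> (3 * step v)"
    by metis
  show ?thesis
    by (rule that[of "rec_nat 0 (\<lambda>_. step)"]) (use step in auto)
qed

locale annular_scales =
  fixes a :: "nat \<Rightarrow> real"
  assumes scale_0: "a 0 = 0"
    and scale_growth: "8 * a k \<le> a (Suc k)"
    and scale_Suc_ge_1: "1 \<le> a (Suc k)"
begin

definition outer :: "nat \<Rightarrow> real" where
  "outer k = 8 * a (Suc k)"

definition piece :: "nat \<Rightarrow> 'a::real_normed_vector \<Rightarrow> 'a" where
  "piece k = radial_tent (a k) (outer k)"

lemma scale_nonneg: "0 \<le> a k"
proof (cases k)
  case 0
  then show ?thesis by (simp add: scale_0)
next
  case (Suc n)
  then show ?thesis using scale_Suc_ge_1[of n] by simp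
qed

lemma scale_le_Suc: "a k \<le> a (Suc k)"
  using scale_growth[of k] scale_nonneg[of k] by linarith

lemma scale_mono: "i \<le> j \<Longrightarrow> a i \<le> a j"
  using incseq_SucI[of a, OF scale_le_Suc] by (simp add: incseq_def)

lemma scale_Suc_ge: "real (Suc k) \<le> a (Suc k)"
proof (induction k)
  case 0
  show ?case using scale_Suc_ge_1[of 0] by simp
next
  case (Suc k)
  then show ?case using scale_growth[of "Suc k"] by simp
qed

lemma outer_nonneg: "0 \<le> outer k"
  using scale_nonneg by (simp add: outer_def)

lemma outer_le_scale:
  assumes "i < j" and "i mod 2 = j mod 2"
  shows "outer i \<le> a j"
proof -
  from assms have "Suc (Suc i) \<le> j" by presburger
  then have "a (Suc (Suc i)) \<le> a j" by (rule scale_mono)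
  then show ?thesis
    using scale_growth[of "Suc i"] by (simp add: outer_def)
qed

lemma norm_piece: "norm (piece k x) = tent (a k) (outer k) (norm x)"
  by (simp add: piece_def norm_radial_tent scale_nonneg)

lemma norm_piece_le_outer: "norm (piece k x) \<le> outer k"
  by (simp add: norm_piece tent_le_outer outer_nonneg)

lemma piece_nonzero_imp: "piece k x \<noteq> 0 \<Longrightarrow> a k < norm x \<and> norm x < outer k"
  using tent_nonzero_imp by (metis norm_eq_zero norm_piece)

lemma piece_lipschitz: "norm (piece k x - piece k y) \<le> 3 * norm (x - y)"
  by (simp add: piece_def radial_tent_lipschitz scale_nonneg)

lemma piece_same_parity_unique:
  assumes "i mod 2 = j mod 2" and "piece i x \<noteq> 0" and "piece j x \<noteq> 0"
  shows "i = j"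
proof (rule ccontr)
  assume "i \<noteq> j"
  then have "outer i \<le> a j \<or> outer j \<le> a i"
    using outer_le_scale assms(1) by (metis linorder_neqE_nat)
  then show False
    using piece_nonzero_imp[OF assms(2)] piece_nonzero_imp[OF assms(3)] by linarith
qed

text \<open>The fallback index c has parity c, so its piece vanishes at x whenever the condition fails.\<close>

definition active :: "nat \<Rightarrow> 'a::real_normed_vector \<Rightarrow> nat" where
  "active c x = (if \<exists>k. k mod 2 = c \<and> piece k x \<noteq> 0
     then LEAST k. k mod 2 = c \<and> piece k x \<noteq> 0 else c)"

lemma active_mod:
  assumes "c < 2"
  shows "active c x mod 2 = c"
proof (cases "\<exists>k. k mod 2 = c \<and> piece k x \<noteq> 0")
  case True
  then show ?thesis
    unfolding active_def if_P[OF True] by (rule LeastI2_ex) simp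
next
  case False
  then show ?thesis
    unfolding active_def if_not_P[OF False] using assms by simp
qed

lemma piece_inactive:
  assumes "i mod 2 = c" and "i \<noteq> active c x"
  shows "piece i x = 0"
proof (rule ccontr)
  assume "piece i x \<noteq> 0"
  with assms(1) have ex: "\<exists>k. k mod 2 = c \<and> piece k x \<noteq> 0" by blast
  then have "active c x mod 2 = c \<and> piece (active c x) x \<noteq> 0"
    unfolding active_def using LeastI_ex[OF ex] by simp
  then show False
    using piece_same_parity_unique[of i "active c x" x] assms \<open>piece i x \<noteq> 0\<close> by simp
qed

lemma annulus_index:
  obtains k where "4 * a k \<le> norm x" and "norm x < 4 * a (Suc k)"
proof -
  have "norm x < 4 * a (Suc (nat \<lceil>norm x\<rceil>))"
    using scale_Suc_ge[of "nat \<lceil>norm x\<rceil>"] by linarith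
  moreover have "\<not> norm x < 4 * a 0" by (simp add: scale_0)
  ultimately obtain k where "\<not> norm x < 4 * a k" and "norm x < 4 * a (Suc k)"
    using ex_least_nat_less[of "\<lambda>k. norm x < 4 * a k"] by blast
  then show ?thesis using that by (simp add: not_less)
qed

lemma active_in_annulus:
  assumes "x \<noteq> 0" and "4 * a k \<le> norm x" and "norm x < 4 * a (Suc k)"
  shows "active (k mod 2) x = k" and "norm (piece k x) = norm x - a k"
    and "norm x \<le> (a k + outer k) / 2"
proof -
  show inner: "norm x \<le> (a k + outer k) / 2"
    using assms(3) scale_nonneg[of k] by (simp add: outer_def)
  have "0 \<le> norm x - a k"
    using assms(2) scale_nonneg[of k] by linarith
  moreover have "norm x - a k \<le> outer k - norm x"
    using inner by (simp add: field_simps)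
  ultimately show norm_eq: "norm (piece k x) = norm x - a k"
    by (simp add: norm_piece tent_def)
  have "0 < norm x" using assms(1) by simp
  then have "piece k x \<noteq> 0"
    using norm_eq assms(2) scale_nonneg[of k] by (auto simp del: norm_le_zero_iff)
  then show "active (k mod 2) x = k"
    using piece_inactive[of k "k mod 2" x] by metis
qed

end

locale annular_gluing = annular_scales a
  for a :: "nat \<Rightarrow> real" +
  fixes \<rho> \<omega> :: "real \<Rightarrow> real"
    and h :: "nat \<Rightarrow> 'a::real_normed_vector \<Rightarrow> 'm::metric_space"
    and m0 :: 'm
  assumes rho_nonneg: "0 \<le> t \<Longrightarrow> 0 \<le> \<rho> t"
    and rho_mono: "mono_on {0..} \<rho>"
    and omega_mono: "mono_on {0..} \<omega>"
    and h_zero: "1 \<le> n \<Longrightarrow> h n 0 = m0"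
    and h_lower: "1 \<le> n \<Longrightarrow> norm x \<le> real n \<Longrightarrow> norm y \<le> real n \<Longrightarrow>
      \<rho> (norm (x - y)) \<le> dist (h n x) (h n y)"
    and h_upper: "1 \<le> n \<Longrightarrow> norm x \<le> real n \<Longrightarrow> norm y \<le> real n \<Longrightarrow>
      dist (h n x) (h n y) \<le> \<omega> (norm (x - y))"
    and scales_separate: "2 * \<omega> (8 * a k) \<le> \<rho> (3 * a (Suc k))"
begin

lemma rho_le: "0 \<le> u \<Longrightarrow> u \<le> v \<Longrightarrow> \<rho> u \<le> \<rho> v"
  using mono_onD[OF rho_mono, of u v] by simp

lemma omega_le: "0 \<le> u \<Longrightarrow> u \<le> v \<Longrightarrow> \<omega> u \<le> \<omega> v"
  using mono_onD[OF omega_mono, of u v] by simp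

lemma rho_0: "\<rho> 0 \<le> 0"
  using h_lower[of 1 0 0] by simp

lemma omega_nonneg: "0 \<le> t \<Longrightarrow> 0 \<le> \<omega> t"
  using h_upper[of 1 0 0] omega_le[of 0 t] by simp

definition level :: "nat \<Rightarrow> nat" where
  "level k = nat \<lceil>outer k\<rceil> + 1"

definition branch :: "nat \<Rightarrow> 'a \<Rightarrow> 'm" where
  "branch c x = h (level (active c x)) (piece (active c x) x)"

lemma level_ge_1: "1 \<le> level k"
  by (simp add: level_def)

lemma norm_piece_le_level: "norm (piece k x) \<le> real (level k)"
  using norm_piece_le_outer[of k x] by (simp add: level_def) linarith

lemma h_level_zero: "h (level k) 0 = m0"
  by (rule h_zero[OF level_ge_1])

lemma dist_piece_le: "dist (h (level k) (piece k x)) (h (level k) (piece k y)) \<le> \<omega> (3 * norm (x - y))"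
  using order_trans[OF h_upper[OF level_ge_1 norm_piece_le_level norm_piece_le_level]
    omega_le[OF norm_ge_zero piece_lipschitz]] .

lemma dist_piece_ge: "\<rho> (norm (piece k x - piece k y)) \<le> dist (h (level k) (piece k x)) (h (level k) (piece k y))"
  using h_lower[OF level_ge_1 norm_piece_le_level norm_piece_le_level] .

lemma dist_piece_m0_le: "dist (h (level k) (piece k x)) m0 \<le> \<omega> (norm (piece k x))"
  using h_upper[OF level_ge_1 norm_piece_le_level[of k x], of 0] by (simp add: h_level_zero)

lemma dist_piece_m0_ge: "\<rho> (norm (piece k x)) \<le> dist (h (level k) (piece k x)) m0"
  using h_lower[OF level_ge_1 norm_piece_le_level[of k x], of 0] by (simp add: h_level_zero)

text \<open>If different pieces are active at x and y, each vanishes at the other point, so both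
  distances to \<open>m0\<close> are controlled by a single piece.\<close>

lemma dist_branch_le:
  assumes "c < 2"
  shows "dist (branch c x) (branch c y) \<le> 2 * \<omega> (3 * norm (x - y))"
proof (cases "active c x = active c y")
  case True
  then show ?thesis
    using dist_piece_le[of "active c x" x y] omega_nonneg[of "3 * norm (x - y)"]
    by (simp add: branch_def)
next
  case False
  define k j where "k = active c x" and "j = active c y"
  have "piece k y = 0" and "piece j x = 0"
    using piece_inactive[of k c y] piece_inactive[of j c x]
      active_mod[OF assms, of x] active_mod[OF assms, of y] False
    by (simp_all add: k_def j_def)
  then have "dist (branch c x) m0 \<le> \<omega> (3 * norm (x - y))"
    and "dist m0 (branch c y) \<le> \<omega> (3 * norm (x - y))"
    using dist_piece_le[of k x y] dist_piece_le[of j x y]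
    by (simp_all add: branch_def k_def j_def h_level_zero)
  then show ?thesis
    using dist_triangle[of "branch c x" "branch c y" m0] by linarith
qed

text \<open>If a different piece is active at y, it lives on a much smaller annulus, and the growth of
  the scales makes its contribution at most half of the one at x.\<close>

lemma dist_branch_ge_annulus:
  assumes "x \<noteq> 0" and "4 * a k \<le> norm x" and "norm x < 4 * a (Suc k)" and "norm y \<le> norm x"
  shows "\<rho> (norm (x - y) / 2) / 2 \<le> dist (branch (k mod 2) x) (branch (k mod 2) y)"
proof -
  define j where "j = active (k mod 2) y"
  have active_x: "active (k mod 2) x = k" and norm_x: "norm (piece k x) = norm x - a k"
    and inner: "norm x \<le> (a k + outer k) / 2"
    using active_in_annulus[OF assms(1-3)] by simp_all
  have branch_x: "branch (k mod 2) x = h (level k) (piece k x)"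
    by (simp add: branch_def active_x)
  have half_le: "norm (x - y) / 2 \<le> norm x - a k" if "norm y \<le> a k"
    using that assms(2) norm_triangle_ineq4[of x y] scale_nonneg[of k] by linarith
  show ?thesis
  proof (cases "j = k \<or> piece j y = 0")
    case same: True
    have "branch (k mod 2) y = h (level k) (piece k y)"
    proof (cases "j = k")
      case True
      then show ?thesis by (simp add: branch_def j_def[symmetric])
    next
      case False
      with same have "piece j y = 0" by simp
      moreover have "piece k y = 0"
        using piece_inactive[of k "k mod 2" y] False by (simp add: j_def)
      ultimately show ?thesis by (simp add: branch_def j_def[symmetric] h_level_zero)
    qed
    moreover have "\<rho> (norm (x - y) / 2) \<le> \<rho> (norm (piece k x - piece k y))"
      using radial_tent_lower[OF scale_nonneg assms(2) inner assms(4)]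
      by (intro rho_le) (simp_all add: piece_def)
    ultimately show ?thesis
      using dist_piece_ge[of k x y] rho_nonneg[of "norm (x - y) / 2"] branch_x by simp
  next
    case False
    then have "piece k y = 0" and y_in_j: "a j < norm y \<and> norm y < outer j"
      using piece_inactive[of k "k mod 2" y] piece_nonzero_imp[of j y] by (auto simp: j_def)
    have j_mod: "j mod 2 = k mod 2" by (simp add: j_def active_mod)
    have "\<not> k < j"
    proof
      assume "k < j"
      then have "outer k \<le> a j" using outer_le_scale j_mod by simp
      then show False using y_in_j assms(3,4) scale_nonneg[of "Suc k"] by (simp add: outer_def)
    qed
    with False have "j < k" by (simp add: j_def)
    with j_mod have "Suc (Suc j) \<le> k" by presburger
    then obtain k' where k': "k = Suc k'" and "Suc j \<le> k'"
      by (cases k) auto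
    then have "\<omega> (norm (piece j y)) \<le> \<omega> (8 * a k')"
      using norm_piece_le_outer[of j y] scale_mono[of "Suc j" k']
      by (intro omega_le) (simp_all add: outer_def)
    then have "2 * \<omega> (norm (piece j y)) \<le> \<rho> (3 * a k)"
      using scales_separate[of k'] k' by simp
    also have "\<dots> \<le> \<rho> (norm x - a k)"
      using assms(2) scale_nonneg[of k] by (intro rho_le) auto
    finally have "2 * \<omega> (norm (piece j y)) \<le> \<rho> (norm x - a k)" .
    moreover have "\<rho> (norm x - a k) \<le> dist (branch (k mod 2) x) m0"
      using dist_piece_m0_ge[of k x] norm_x branch_x by simp
    moreover have "dist (branch (k mod 2) y) m0 \<le> \<omega> (norm (piece j y))"
      using dist_piece_m0_le[of j y] by (simp add: branch_def j_def)
    ultimately have "\<rho> (norm x - a k) / 2 \<le> dist (branch (k mod 2) x) (branch (k mod 2) y)"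
      using dist_triangle[of "branch (k mod 2) x" m0 "branch (k mod 2) y"] by linarith
    moreover have "norm y \<le> a k"
      using outer_le_scale[OF \<open>j < k\<close> j_mod] y_in_j by simp
    ultimately show ?thesis
      using half_le rho_le[of "norm (x - y) / 2" "norm x - a k"] by simp
  qed
qed

lemma dist_branch_ge: "\<exists>c<2. \<rho> (norm (x - y) / 2) / 2 \<le> dist (branch c x) (branch c y)"
proof -
  have ordered: "\<exists>c<2. \<rho> (norm (x - y) / 2) / 2 \<le> dist (branch c x) (branch c y)"
    if "norm y \<le> norm x" for x y
  proof (cases "x = 0")
    case True
    with that have "y = x" by simp
    then show ?thesis using rho_0 by (intro exI[of _ 0]) simp
  next
    case False
    obtain k where "4 * a k \<le> norm x" and "norm x < 4 * a (Suc k)"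
      using annulus_index .
    then show ?thesis
      using dist_branch_ge_annulus[OF False _ _ that] by (intro exI[of _ "k mod 2"]) simp
  qed
  show ?thesis
    using ordered[of y x] ordered[of x y]
    by (cases "norm y \<le> norm x") (auto simp: norm_minus_commute dist_commute)
qed

definition gluing_map :: "'a \<Rightarrow> 'm \<times> 'm \<times> 'm \<times> 'm" where
  "gluing_map x = (branch 0 x, branch 1 x, m0, m0)"

lemma dist4_gluing_map:
  "dist4 (gluing_map x) (gluing_map y) = max (dist (branch 0 x) (branch 0 y)) (dist (branch 1 x) (branch 1 y))"
  by (simp add: dist4_def gluing_map_def max.absorb1 le_max_iff_disj)

lemma gluing_map_lower: "\<rho> (norm (x - y) / 2) / 2 \<le> dist4 (gluing_map x) (gluing_map y)"
proof -
  obtain c where "c < 2" and "\<rho> (norm (x - y) / 2) / 2 \<le> dist (branch c x) (branch c y)"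
    using dist_branch_ge by blast
  moreover from \<open>c < 2\<close> have "c = 0 \<or> c = 1" by auto
  ultimately show ?thesis by (auto simp: dist4_gluing_map)
qed

lemma gluing_map_upper: "dist4 (gluing_map x) (gluing_map y) \<le> 2 * \<omega> (3 * norm (x - y))"
  using dist_branch_le[of 0 x y] dist_branch_le[of 1 x y] by (simp add: dist4_gluing_map)

end

theorem theorem4p4:
  fixes \<rho> \<omega> :: "real \<Rightarrow> real"
    and m0 :: "'m::metric_space"
    and h :: "nat \<Rightarrow> 'a::banach \<Rightarrow> 'm"
  assumes rho_nonneg: "\<forall>t\<ge>0. \<rho> t \<ge> 0"
    and omega_nonneg: "\<forall>t\<ge>0. \<omega> t \<ge> 0"
    and rho_mono: "mono_on {0..} \<rho>"
    and omega_mono: "mono_on {0..} \<omega>"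
    and rho_infty: "filterlim \<rho> at_top at_top"
    and omega_infty: "filterlim \<omega> at_top at_top"
    and h0: "\<forall>n\<ge>1. h n 0 = m0"
    and hbounds: "\<forall>n\<ge>1. \<forall>x y. norm x \<le> real n \<and> norm y \<le> real n \<longrightarrow>
        \<rho> (norm (x - y)) \<le> dist (h n x) (h n y) \<and> dist (h n x) (h n y) \<le> \<omega> (norm (x - y))"
  shows "\<exists>F :: 'a \<Rightarrow> 'm \<times> 'm \<times> 'm \<times> 'm. \<forall>x y.
        (1/2) * \<rho> (norm (x - y) / 2) \<le> dist4 (F x) (F y) \<and>
        dist4 (F x) (F y) \<le> 8 * \<omega> (3 * norm (x - y))"
proof -
  obtain a :: "nat \<Rightarrow> real" where "a 0 = 0" and "\<And>k. 8 * a k \<le> a (Suc k)"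
    and "\<And>k. 1 \<le> a (Suc k)" and "\<And>k. 2 * \<omega> (8 * a k) \<le> \<rho> (3 * a (Suc k))"
    using rapidly_growing_scales[OF rho_infty, where g = "\<lambda>v. 2 * \<omega> (8 * v)"] by blast
  then interpret annular_gluing a \<rho> \<omega> h m0
    using rho_nonneg rho_mono omega_mono h0 hbounds by unfold_locales auto
  show ?thesis
  proof (intro exI allI conjI)
    fix x y :: 'a
    show "(1/2) * \<rho> (norm (x - y) / 2) \<le> dist4 (gluing_map x) (gluing_map y)"
      using gluing_map_lower by simp
    show "dist4 (gluing_map x) (gluing_map y) \<le> 8 * \<omega> (3 * norm (x - y))"
      using gluing_map_upper[of x y] omega_nonneg[of "3 * norm (x - y)"] by simp
  qed
qed

end
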